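(* Let $L$ be a full intersection lattice such that $\hat 1\in\bullet(\mathrm{nti}(L))$, and let $T$ be a witnessing tree for this. Then $\mathrm{mult}_T(U)=-\mu_L(U,\hat 1)$ for every $U\in\mathrm{nti}(L)$.
   Context: A finite family $\mathcal{F}$ of sets is non-trivial if it is non-empty and no $X\in\mathcal{F}$ satisfies $X=\bigcup\mathcal{F}$. For such $\mathcal{F}$ and non-empty $\mathcal{T}\subseteq\mathcal{F}$, let $S_{\mathcal{T}}=\bigcap\mathcal{T}$, and let $S_\emptyset=\bigcup\mathcal{F}$. The intersection lattice of $\mathcal{F}$ is $\mathbb{L}_{\mathcal{F}}=(\{S_{\mathcal{T}}\mid\mathcal{T}\subseteq\mathcal{F}\},\subseteq)$, with greatest element $\hat 1=\bigcup\mathcal{F}$; an intersection lattice is one of this form. For $L=\mathbb{L}_{\mathcal{F}}$ and $x\in\hat 1$, let $\min_L(x)=S_{\{X\in\mathcal{F}\mid x\in X\}}$; $L$ is full if for every $U\in L$, $U\neq\hat 1$, there is $x\in\hat 1$ with $\min_L(x)=U$. The Möbius function of a finite poset $P$ is given for $x\le y$ by $\mu_P(y,y)=1$ and $\mu_P(x,y)=-\sum_{x<z\le y}\mu_P(z,y)$. Let $\mathrm{nti}(L)=\{U\in L\mid U\neq\hat 1\}$. For sets $A,B$, $A\,\dot\cup\,B=A\cup B$ is defined only when $A\cap B=\emptyset$, and $A\,\dot\setminus\,B=A\setminus B$ is defined only when $B\subseteq A$. For a finite family $\mathcal{G}$ of sets, $\bullet(\mathcal{G})$ is the smallest family of sets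 containing $\emptyset$ and every member of $\mathcal{G}$ and closed under well-defined disjoint unions and subset complements. A witnessing tree of $X\in\bullet(\mathcal{G})$ is a rooted ordered tree whose leaves are labelled by $\emptyset$ or by members of $\mathcal{G}$, and whose internal nodes are labelled $\dot\cup$ or $\dot\setminus$ ($\dot\setminus$-nodes being binary), such that evaluating each internal node as the corresponding operation on its children's values (in order) is always well defined and the root evaluates to $X$. For a leaf $\ell$ of $T$, its polarity $\mathrm{pol}_T(\ell)$ is $1$ if the path from the root to $\ell$ goes to the right (second) child of a $\dot\setminus$-node an even number of times, and $-1$ otherwise. For $U\in\mathcal{G}\cup\{\emptyset\}$, $\mathrm{mult}_T(U)=\sum_{\ell}\mathrm{pol}_T(\ell)$, the sum over leaves $\ell$ of $T$ labelled $U$. *)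

theory Defs
  imports Main
begin

definition nontrivial_family :: "'a set set \<Rightarrow> bool" where
  "nontrivial_family F \<longleftrightarrow> finite F \<and> F \<noteq> {} \<and> (\<forall>X\<in>F. X \<noteq> \<Union>F)"

definition S_of :: "'a set set \<Rightarrow> 'a set set \<Rightarrow> 'a set" where
  "S_of F T = (if T = {} then \<Union>F else \<Inter>T)"

text \<open>Carrier of the intersection lattice L_F (ordered by set inclusion).\<close>
definition ilat :: "'a set set \<Rightarrow> 'a set set" where
  "ilat F = {S_of F T | T. T \<subseteq> F}"

definition top_of :: "'a set set \<Rightarrow> 'a set" where
  "top_of F = \<Union>F"

definition min_L :: "'a set set \<Rightarrow> 'a \<Rightarrow> 'a set" where
  "min_L F x = S_of F {X\<in>F. x \<in> X}"

definition full :: "'a set set \<Rightarrow> bool" where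
  "full F \<longleftrightarrow> (\<forall>U\<in>ilat F. U \<noteq> top_of F \<longrightarrow> (\<exists>x\<in>top_of F. min_L F x = U))"

definition nti :: "'a set set \<Rightarrow> 'a set set" where
  "nti F = {U\<in>ilat F. U \<noteq> top_of F}"

function mobius :: "'a set set \<Rightarrow> 'a set \<Rightarrow> 'a set \<Rightarrow> int" where
  "mobius P x y =
     (if x = y then 1
      else if finite P \<and> x \<subseteq> y then
        - (\<Sum>z\<in>{z\<in>P. x \<subset> z \<and> z \<subseteq> y}. mobius P z y)
      else 0)"
  by auto
termination
proof (relation "measure (\<lambda>(P,x,y). card {w\<in>P. x \<subset> w \<and> w \<subseteq> y})", goal_cases)
  case 1 then show ?case by simp
next
  case (2 P x y z)
  have "{w\<in>P. z \<subset> w \<and> w \<subseteq> y} \<subset> {w\<in>P. x \<subset> w \<and> w \<subseteq> y}"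
    using 2 by auto
  then show ?case using 2 by (simp add: psubset_card_mono)
qed

declare mobius.simps[simp del]

inductive_set bullet :: "'a set set \<Rightarrow> 'a set set" for G where
  empty: "{} \<in> bullet G"
| base: "X \<in> G \<Longrightarrow> X \<in> bullet G"
| dunion: "A \<in> bullet G \<Longrightarrow> B \<in> bullet G \<Longrightarrow> A \<inter> B = {} \<Longrightarrow> A \<union> B \<in> bullet G"
| sdiff: "A \<in> bullet G \<Longrightarrow> B \<in> bullet G \<Longrightarrow> B \<subseteq> A \<Longrightarrow> A - B \<in> bullet G"

datatype 'a wtree = Leaf "'a set" | DUnion "'a wtree list" | DDiff "'a wtree" "'a wtree"

fun wval :: "'a wtree \<Rightarrow> 'a set" where
  "wval (Leaf X) = X"
| "wval (DUnion ts) = \<Union>(set (map wval ts))"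
| "wval (DDiff a b) = wval a - wval b"

fun well_defined :: "'a wtree \<Rightarrow> bool" where
  "well_defined (Leaf X) = True"
| "well_defined (DUnion ts) =
     (ts \<noteq> [] \<and> (\<forall>t\<in>set ts. well_defined t) \<and>
      (\<forall>i<length ts. \<forall>j<length ts. i \<noteq> j \<longrightarrow> wval (ts ! i) \<inter> wval (ts ! j) = {}))"
| "well_defined (DDiff a b) = (well_defined a \<and> well_defined b \<and> wval b \<subseteq> wval a)"

fun leaves_pol :: "'a wtree \<Rightarrow> ('a set \<times> int) list" where
  "leaves_pol (Leaf X) = [(X, 1)]"
| "leaves_pol (DUnion ts) = concat (map leaves_pol ts)"
| "leaves_pol (DDiff a b) = leaves_pol a @ map (\<lambda>(X, p). (X, - p)) (leaves_pol b)"

definition witnessing_tree :: "'a set set \<Rightarrow> 'a set \<Rightarrow> 'a wtree \<Rightarrow> bool" where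
  "witnessing_tree G X T \<longleftrightarrow>
     (\<forall>(Y, p)\<in>set (leaves_pol T). Y = {} \<or> Y \<in> G) \<and> well_defined T \<and> wval T = X"

definition mult :: "'a wtree \<Rightarrow> 'a set \<Rightarrow> int" where
  "mult T U = sum_list [p. (Y, p) \<leftarrow> leaves_pol T, Y = U]"

end

theory Submission
  imports Defs
begin

text \<open>Evaluated at a single point x, a disjoint-union node adds the indicators of its children and
  a complement node subtracts them, so the signed number of leaves of T containing x is the
  indicator of x in the root. For x in the top element this gives that mult T summed over the
  members of nti L containing x is 1. By fullness every V in nti L is min_L x for some x, and then
  x \<in> U iff V \<subseteq> U; hence the sums of mult T over all up-sets of nti L equal 1. The defining
  recursion of the Moebius function shows that U \<mapsto> - mobius U top solves the same triangular
  system, whose solution is unique.\<close>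

lemma eq_if_upset_sums_eq:
  fixes N :: "'a::order set" and f g :: "'a \<Rightarrow> 'b::ab_group_add"
  assumes "finite N"
    and sums_eq: "\<And>V. V \<in> N \<Longrightarrow> (\<Sum>U | U \<in> N \<and> V \<le> U. f U) = (\<Sum>U | U \<in> N \<and> V \<le> U. g U)"
  shows "\<forall>V\<in>N. f V = g V"
proof (rule ccontr)
  assume "\<not> (\<forall>V\<in>N. f V = g V)"
  then obtain V where V: "V \<in> N" "f V \<noteq> g V"
    and maximal: "\<And>U. U \<in> N \<Longrightarrow> V < U \<Longrightarrow> f U = g U"
    using finite_has_maximal[of "{V \<in> N. f V \<noteq> g V}"] \<open>finite N\<close> by (auto simp: less_le)
  have upset: "{U. U \<in> N \<and> V \<le> U} = insert V {U. U \<in> N \<and> V < U}"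
    using V(1) by auto
  have "(\<Sum>U | U \<in> N \<and> V < U. f U) = (\<Sum>U | U \<in> N \<and> V < U. g U)"
    using maximal by (intro sum.cong) auto
  then have "f V = g V"
    using sums_eq[OF V(1)] \<open>finite N\<close> by (simp add: upset)
  with V(2) show False ..
qed

lemma sum_list_filter_eq_sum_groups:
  fixes L :: "('a \<times> 'b::comm_monoid_add) list"
  assumes "finite S" and "fst ` set L \<subseteq> S"
  shows "sum_list [p. (Y, p) \<leftarrow> L, P Y] = (\<Sum>U | U \<in> S \<and> P U. sum_list [p. (Y, p) \<leftarrow> L, Y = U])"
  using assms(2)
proof (induction L)
  case (Cons a L)
  obtain Y0 p0 where a: "a = (Y0, p0)" by fastforce
  have "\<And>U. sum_list [p. (Y, p) \<leftarrow> a # L, Y = U]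
      = (if U = Y0 then p0 else 0) + sum_list [p. (Y, p) \<leftarrow> L, Y = U]"
    by (auto simp: a)
  then show ?case
    using Cons \<open>finite S\<close> by (auto simp: a sum.distrib)
qed simp

lemma sum_list_indicator_disjoint:
  assumes "\<forall>i<length ts. \<forall>j<length ts. i \<noteq> j \<longrightarrow> f (ts ! i) \<inter> f (ts ! j) = {}"
  shows "(\<Sum>t\<leftarrow>ts. of_bool (x \<in> f t) :: int) = of_bool (x \<in> \<Union>(f ` set ts))"
  using assms
proof (induction ts)
  case (Cons a ts)
  have "\<forall>i<length ts. \<forall>j<length ts. i \<noteq> j \<longrightarrow> f (ts ! i) \<inter> f (ts ! j) = {}"
    using Cons.prems by (metis Suc_inject length_Cons not_less_eq nth_Cons_Suc)
  moreover have "f a \<inter> f t = {}" if "t \<in> set ts" for t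
    using that Cons.prems[rule_format, of 0 "Suc _"] by (auto simp: in_set_conv_nth)
  ultimately show ?case
    using Cons.IH by (auto simp: disjoint_iff)
qed simp

lemma signed_leaf_count_eq_indicator:
  assumes "well_defined T"
  shows "sum_list [p. (Y, p) \<leftarrow> leaves_pol T, x \<in> Y] = of_bool (x \<in> wval T)"
  using assms
proof (induction T)
  case (DUnion ts)
  have "sum_list [p. (Y, p) \<leftarrow> leaves_pol (DUnion ts), x \<in> Y]
      = (\<Sum>t\<leftarrow>ts. sum_list [p. (Y, p) \<leftarrow> leaves_pol t, x \<in> Y])"
    by (induction ts) auto
  also have "\<dots> = (\<Sum>t\<leftarrow>ts. of_bool (x \<in> wval t))"
    using DUnion by (intro arg_cong[where f = sum_list] map_cong) auto
  also have "\<dots> = of_bool (x \<in> wval (DUnion ts))"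
    using DUnion.prems by (simp add: sum_list_indicator_disjoint)
  finally show ?case .
next
  case (DDiff a b)
  have "sum_list [p. (Y, p) \<leftarrow> map (\<lambda>(X, p). (X, - p)) L, x \<in> Y]
      = - sum_list [p. (Y, p) \<leftarrow> L, x \<in> Y]" for L :: "('a set \<times> int) list"
    by (induction L) auto
  then show ?case
    using DDiff by auto
qed simp

lemma sum_mult_containing:
  assumes "witnessing_tree G X T" and "finite G"
  shows "(\<Sum>U | U \<in> G \<and> x \<in> U. mult T U) = of_bool (x \<in> X)"
proof -
  have labels: "fst ` set (leaves_pol T) \<subseteq> insert {} G"
    using assms(1) by (auto simp: witnessing_tree_def)
  have "of_bool (x \<in> X) = sum_list [p. (Y, p) \<leftarrow> leaves_pol T, x \<in> Y]"
    using assms(1) by (simp add: witnessing_tree_def signed_leaf_count_eq_indicator)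
  also have "\<dots> = (\<Sum>U | U \<in> insert {} G \<and> x \<in> U. mult T U)"
    unfolding mult_def by (rule sum_list_filter_eq_sum_groups[OF _ labels]) (simp add: \<open>finite G\<close>)
  also have "{U. U \<in> insert {} G \<and> x \<in> U} = {U. U \<in> G \<and> x \<in> U}"
    by auto
  finally show ?thesis ..
qed

lemma finite_ilat: "finite F \<Longrightarrow> finite (ilat F)"
  by (simp add: ilat_def setcompr_eq_image)

lemma top_of_in_ilat: "top_of F \<in> ilat F"
  unfolding ilat_def top_of_def S_of_def by auto

lemma ilat_subset_top_of: "U \<in> ilat F \<Longrightarrow> U \<subseteq> top_of F"
  unfolding ilat_def top_of_def S_of_def by (force split: if_splits)

lemma mem_iff_min_L_subset:
  assumes "x \<in> top_of F" and "U \<in> ilat F"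
  shows "x \<in> U \<longleftrightarrow> min_L F x \<subseteq> U"
proof -
  have min_L: "min_L F x = \<Inter>{X \<in> F. x \<in> X}"
    using assms(1) by (auto simp: min_L_def S_of_def top_of_def)
  obtain Ts where "Ts \<subseteq> F" and U: "U = S_of F Ts"
    using assms(2) by (auto simp: ilat_def)
  then show ?thesis
    using assms(1) by (auto simp: min_L S_of_def top_of_def)
qed

lemma sum_mobius_interval:
  assumes "finite P" and "x \<in> P" and "x \<subset> y"
  shows "(\<Sum>z | z \<in> P \<and> x \<subseteq> z \<and> z \<subseteq> y. mobius P z y) = 0"
proof -
  have "{z. z \<in> P \<and> x \<subseteq> z \<and> z \<subseteq> y} = insert x {z \<in> P. x \<subset> z \<and> z \<subseteq> y}"
    using assms(2,3) by auto
  moreover have "mobius P x y = - (\<Sum>z | z \<in> P \<and> x \<subset> z \<and> z \<subseteq> y. mobius P z y)"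
    using assms(1,3) by (subst mobius.simps) auto
  ultimately show ?thesis
    using assms(1) by simp
qed

lemma sum_mobius_nti_upset:
  assumes "finite F" and "V \<in> nti F"
  shows "(\<Sum>U | U \<in> nti F \<and> V \<subseteq> U. - mobius (ilat F) U (top_of F)) = 1"
proof -
  have upset: "{U. U \<in> ilat F \<and> V \<subseteq> U \<and> U \<subseteq> top_of F}
      = insert (top_of F) {U. U \<in> nti F \<and> V \<subseteq> U}"
    using assms(2) top_of_in_ilat ilat_subset_top_of by (auto simp: nti_def)
  have "V \<subset> top_of F"
    using assms(2) ilat_subset_top_of by (auto simp: nti_def)
  moreover have "V \<in> ilat F" and "top_of F \<notin> nti F" and "finite (nti F)"
    using assms by (simp_all add: nti_def finite_ilat)
  ultimately have "mobius (ilat F) (top_of F) (top_of F)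
      + (\<Sum>U | U \<in> nti F \<and> V \<subseteq> U. mobius (ilat F) U (top_of F)) = 0"
    using sum_mobius_interval[OF finite_ilat[OF assms(1)], of V "top_of F"]
    by (simp add: upset)
  then show ?thesis
    by (simp add: sum_negf mobius.simps)
qed

theorem proposition4p7:
  fixes F :: "'a set set" and T :: "'a wtree"
  assumes "nontrivial_family F"
    and "full F"
    and "top_of F \<in> bullet (nti F)"
    and "witnessing_tree (nti F) (top_of F) T"
  shows "\<forall>U\<in>nti F. mult T U = - mobius (ilat F) U (top_of F)"
proof -
  have "finite F"
    using assms(1) by (simp add: nontrivial_family_def)
  then have finite_nti: "finite (nti F)"
    by (simp add: nti_def finite_ilat)
  have "(\<Sum>U | U \<in> nti F \<and> V \<subseteq> U. mult T U) = 1" if "V \<in> nti F" for V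
  proof -
    obtain x where x: "x \<in> top_of F" "min_L F x = V"
      using assms(2) \<open>V \<in> nti F\<close> by (auto simp: full_def nti_def)
    then have "{U. U \<in> nti F \<and> V \<subseteq> U} = {U. U \<in> nti F \<and> x \<in> U}"
      unfolding nti_def using mem_iff_min_L_subset[OF x(1)] x(2) by blast
    then show ?thesis
      using sum_mult_containing[OF assms(4) finite_nti, of x] x(1) by simp
  qed
  with finite_nti show ?thesis
    using sum_mobius_nti_upset[OF \<open>finite F\<close>] by (intro eq_if_upset_sums_eq) simp_all
qed

end
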